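(* Let $R>0$ and $\alpha_0\in(0,\frac{3}{4R})$, and define $\{\alpha_k\}_{k\ge0}$ by $$\alpha_{k+1}=\alpha_k\left(1-\frac{1}{(k+1)(k+3)}\,\frac{\alpha_k^2R^2}{1-\alpha_k^2R^2}\right),\qquad k\ge 0.$$ Then $\{\alpha_k\}_{k\ge0}$ is well defined, monotonically decreasing, and converges to a positive limit. In particular, when $\alpha_0=\frac{0.618}{R}$, one has $\lim_{k\to\infty}\alpha_k\approx\frac{0.437}{R}$. *)

theory Defs
  imports "HOL-Analysis.Analysis"
begin

primrec alpha_seq :: "real \<Rightarrow> real \<Rightarrow> nat \<Rightarrow> real" where
  "alpha_seq R a0 0 = a0"
| "alpha_seq R a0 (Suc k) =
     alpha_seq R a0 k * (1 - 1 / ((real k + 1) * (real k + 3)) *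
       ((alpha_seq R a0 k)^2 * R^2 / (1 - (alpha_seq R a0 k)^2 * R^2)))"

end

theory Submission
  imports Defs "HOL-Real_Asymp.Real_Asymp"
begin

text \<open>
  Scaling by \<open>R\<close> reduces the statement to \<open>R = 1\<close>, where
  \<open>x\<^sub>k\<^sub>+\<^sub>1 = x\<^sub>k (1 - c\<^sub>k \<phi>(x\<^sub>k))\<close> with \<open>\<phi>(t) = t\<^sup>2/(1 - t\<^sup>2)\<close> and
  \<open>c\<^sub>k = 1/((k+1)(k+3))\<close>. For \<open>0 < x\<^sub>0 < 3/4\<close> one has \<open>c\<^sub>k \<phi>(x\<^sub>k) < 3/7\<close>, so the
  sequence stays positive and decreases to some \<open>L\<close>. The coefficients telescope,
  \<open>c\<^sub>k = S\<^sub>k - S\<^sub>k\<^sub>+\<^sub>1\<close> with \<open>S\<^sub>k = (1/(k+1) + 1/(k+2))/2 \<longrightarrow> 0\<close> (\<open>tail\<close> below), and this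
  makes \<open>x\<^sub>k (1 - \<phi>(x\<^sub>N) S\<^sub>k)\<close> increasing and \<open>x\<^sub>k / (1 + \<phi>(L) S\<^sub>k)\<close> decreasing for
  \<open>k \<ge> N\<close>. Hence \<open>x\<^sub>N (1 - \<phi>(x\<^sub>N) S\<^sub>N) \<le> L \<le> x\<^sub>N / (1 + \<phi>(L) S\<^sub>N)\<close>. For \<open>N = 0\<close> the
  lower bound is positive; for \<open>x\<^sub>0 = 0.618\<close> and \<open>N = 40\<close> the two bounds give
  \<open>0.4365 \<le> L \<le> 0.4375\<close>, once \<open>x\<^sub>4\<^sub>0\<close> has been enclosed in a short interval by forty
  steps of interval arithmetic.
\<close>

definition phi :: "real \<Rightarrow> real" where
  "phi t = t\<^sup>2 / (1 - t\<^sup>2)"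

definition coef :: "nat \<Rightarrow> real" where
  "coef k = 1 / ((real k + 1) * (real k + 3))"

definition tail :: "nat \<Rightarrow> real" where
  "tail k = (1 / (real k + 1) + 1 / (real k + 2)) / 2"

definition alpha_step :: "nat \<Rightarrow> real \<Rightarrow> real" where
  "alpha_step k x = x * (1 - coef k * phi x)"

lemma alpha_seq_1_Suc: "alpha_seq 1 b (Suc k) = alpha_step k (alpha_seq 1 b k)"
  by (simp add: alpha_step_def coef_def phi_def)

declare alpha_seq.simps(2) [simp del]

lemma alpha_seq_scale: "alpha_seq R a0 k * R = alpha_seq 1 (a0 * R) k"
proof (induction k)
  case 0
  then show ?case by simp
next
  case (Suc k)
  show ?case
    unfolding alpha_seq_1_Suc Suc.IH[symmetric]
    by (simp add: alpha_seq.simps(2) alpha_step_def coef_def phi_def power_mult_distrib)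
qed

lemma phi_mono:
  assumes "0 \<le> s" "s \<le> t" "t < 1"
  shows "phi s \<le> phi t"
proof -
  have "s\<^sup>2 \<le> t\<^sup>2" "t\<^sup>2 < 1"
    using assms by (auto intro: power_mono simp: abs_square_less_1)
  then show ?thesis
    unfolding phi_def by (intro frac_le) auto
qed

lemma phi_nonneg: "0 \<le> t \<Longrightarrow> t < 1 \<Longrightarrow> 0 \<le> phi t"
  using phi_mono[of 0 t] by (simp add: phi_def)

lemma phi_less:
  assumes "0 \<le> t" "t < 3/4"
  shows "phi t < 9/7"
proof -
  have "t\<^sup>2 < (3/4)\<^sup>2"
    using assms by (intro power_strict_mono) auto
  then show ?thesis
    unfolding phi_def by (simp add: divide_less_eq power2_eq_square)
qed

lemma coef_pos: "0 < coef k"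
  by (simp add: coef_def)

lemma coef_le: "coef k \<le> 1/3"
proof -
  have "1 * 3 \<le> (real k + 1) * (real k + 3)"
    by (intro mult_mono) auto
  then show ?thesis
    unfolding coef_def by (intro divide_left_mono) auto
qed

lemma coef_mult_phi_less_1:
  assumes "0 \<le> t" "t < 3/4"
  shows "coef k * phi t < 1"
proof -
  have "coef k * phi t \<le> 1/3 * phi t"
    using coef_le assms phi_nonneg[of t] by (intro mult_right_mono) auto
  then show ?thesis
    using phi_less[OF assms] by linarith
qed

lemma coef_eq_tail_diff: "coef k = tail k - tail (Suc k)"
proof -
  have "1 / (real k + 1) - 1 / (real k + 3) = 2 / ((real k + 1) * (real k + 3))"
    by (simp add: field_simps)
  then show ?thesis
    by (simp add: coef_def tail_def algebra_simps)
qed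

lemma tail_nonneg: "0 \<le> tail k"
  by (simp add: tail_def)

lemma tail_le: "tail k \<le> 3/4"
proof -
  have "1 / (real k + 1) \<le> 1" "1 / (real k + 2) \<le> 1/2"
    by (simp_all add: field_simps)
  then show ?thesis
    unfolding tail_def by argo
qed

lemma tail_tendsto_0: "tail \<longlonglongrightarrow> 0"
  unfolding tail_def by real_asymp

lemma alpha_step_interval:
  assumes "0 \<le> l" "l \<le> x" "x \<le> h" "h < 3/4"
  shows "l * (1 - coef k * phi h) \<le> alpha_step k x"
    and "alpha_step k x \<le> h * (1 - coef k * phi l)"
proof -
  have "phi l \<le> phi x" "phi x \<le> phi h"
    using assms by (auto intro: phi_mono)
  then have "1 - coef k * phi h \<le> 1 - coef k * phi x" "1 - coef k * phi x \<le> 1 - coef k * phi l"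
    using coef_pos[of k] by (simp_all add: mult_left_mono)
  moreover have "0 \<le> 1 - coef k * phi h"
    using coef_mult_phi_less_1[of h k] assms by simp
  ultimately show "l * (1 - coef k * phi h) \<le> alpha_step k x"
    and "alpha_step k x \<le> h * (1 - coef k * phi l)"
    unfolding alpha_step_def using assms by (auto intro: mult_mono)
qed

fun enclosure_chain :: "nat \<Rightarrow> (real \<times> real) list \<Rightarrow> bool" where
  "enclosure_chain k ((l, h) # (l', h') # ps) \<longleftrightarrow>
     0 \<le> l \<and> h < 3/4 \<and> l' \<le> l * (1 - coef k * phi h) \<and> h * (1 - coef k * phi l) \<le> h' \<and>
     enclosure_chain (Suc k) ((l', h') # ps)"
| "enclosure_chain k ps \<longleftrightarrow> True"

lemma alpha_seq_enclosure_chain: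
  assumes "enclosure_chain k ps" "ps \<noteq> []"
    and "alpha_seq 1 b k \<in> {fst (hd ps)..snd (hd ps)}"
  shows "alpha_seq 1 b (k + length ps - 1) \<in> {fst (last ps)..snd (last ps)}"
  using assms
proof (induction k ps rule: enclosure_chain.induct)
  case (1 k l h l' h' ps)
  then have "alpha_seq 1 b (Suc k) \<in> {l'..h'}"
    using alpha_step_interval[of l "alpha_seq 1 b k" h k] by (auto simp: alpha_seq_1_Suc)
  with 1 show ?case
    by simp
qed auto

context
  fixes b :: real
  assumes b_pos: "0 < b" and b_less: "b < 3/4"
begin

lemma alpha_seq_1_bounds: "0 < alpha_seq 1 b k \<and> alpha_seq 1 b k \<le> b"
proof (induction k)
  case 0
  then show ?case using b_pos by simp
next
  case (Suc k)
  define x where "x = alpha_seq 1 b k"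
  have "0 \<le> coef k * phi x" "coef k * phi x < 1"
    using Suc b_less coef_pos[of k] phi_nonneg[of x] coef_mult_phi_less_1[of x k]
    by (simp_all add: x_def)
  then have "0 < x * (1 - coef k * phi x)" "x * (1 - coef k * phi x) \<le> x"
    using Suc by (simp_all add: x_def mult_le_cancel_left1)
  moreover have "alpha_seq 1 b (Suc k) = x * (1 - coef k * phi x)"
    by (simp add: alpha_seq_1_Suc alpha_step_def x_def)
  ultimately show ?case
    using Suc unfolding x_def by (intro conjI) linarith+
qed

lemma alpha_seq_1_decseq: "decseq (alpha_seq 1 b)"
proof (rule decseq_SucI)
  fix k
  have "0 \<le> coef k * phi (alpha_seq 1 b k)"
    using alpha_seq_1_bounds[of k] b_less coef_pos[of k] phi_nonneg by simp
  then show "alpha_seq 1 b (Suc k) \<le> alpha_seq 1 b k"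
    using alpha_seq_1_bounds[of k] by (simp add: alpha_seq_1_Suc alpha_step_def mult_le_cancel_left1)
qed

lemma phi_alpha_seq_1_antimono:
  assumes "N \<le> k"
  shows "phi (alpha_seq 1 b k) \<le> phi (alpha_seq 1 b N)"
proof (rule phi_mono)
  show "alpha_seq 1 b k \<le> alpha_seq 1 b N"
    using alpha_seq_1_decseq assms by (rule decseqD)
qed (use alpha_seq_1_bounds[of k] alpha_seq_1_bounds[of N] b_less in auto)

lemma alpha_seq_1_lower_invariant:
  fixes N k :: nat
  defines "c \<equiv> phi (alpha_seq 1 b N)"
  assumes "N \<le> k"
  shows "alpha_seq 1 b N * (1 - c * tail N) \<le> alpha_seq 1 b k * (1 - c * tail k)"
  using assms(2)
proof (induction k rule: dec_induct)
  case base
  then show ?case by simp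
next
  case (step k)
  define x where "x = alpha_seq 1 b k"
  have x: "0 \<le> x" "x < 3/4"
    using alpha_seq_1_bounds[of k] b_less by (simp_all add: x_def)
  have c: "0 \<le> c" "c < 9/7"
    unfolding c_def using alpha_seq_1_bounds[of N] b_less
    by (intro phi_nonneg phi_less; simp)+
  have "c * tail (Suc k) \<le> 9/7 * (3/4)"
    using c tail_le[of "Suc k"] tail_nonneg[of "Suc k"] by (intro mult_mono) auto
  then have "0 \<le> 1 - c * tail (Suc k)"
    by simp
  moreover have "coef k * phi x \<le> coef k * c"
    using phi_alpha_seq_1_antimono[OF step.hyps(1)] coef_pos[of k]
    by (simp add: x_def c_def)
  ultimately have "x * (1 - coef k * c) * (1 - c * tail (Suc k))
      \<le> x * (1 - coef k * phi x) * (1 - c * tail (Suc k))"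
    using x by (intro mult_right_mono mult_left_mono) auto
  moreover have "x * (1 - coef k * c) * (1 - c * tail (Suc k))
      = x * (1 - c * tail k) + x * coef k * c\<^sup>2 * tail (Suc k)"
    by (simp add: coef_eq_tail_diff algebra_simps power2_eq_square)
  moreover have "0 \<le> x * coef k * c\<^sup>2 * tail (Suc k)"
    using x coef_pos[of k] tail_nonneg[of "Suc k"] by simp
  ultimately have "x * (1 - c * tail k) \<le> alpha_seq 1 b (Suc k) * (1 - c * tail (Suc k))"
    by (simp add: alpha_seq_1_Suc alpha_step_def x_def)
  then show ?case
    using step.IH by (simp add: x_def)
qed

lemma alpha_seq_1_upper_invariant:
  assumes c: "0 \<le> c" "\<And>j. c \<le> phi (alpha_seq 1 b j)" and "N \<le> k"
  shows "alpha_seq 1 b k / (1 + c * tail k) \<le> alpha_seq 1 b N / (1 + c * tail N)"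
  using assms(3)
proof (induction k rule: dec_induct)
  case base
  then show ?case by simp
next
  case (step k)
  define x where "x = alpha_seq 1 b k"
  have x: "0 \<le> x"
    using alpha_seq_1_bounds[of k] by (simp add: x_def)
  have denom: "0 < 1 + c * tail k" "0 < 1 + c * tail (Suc k)"
    using c(1) tail_nonneg by (simp_all add: add_pos_nonneg)
  have "coef k * c \<le> coef k * phi x"
    using c(2)[of k] coef_pos[of k] by (simp add: x_def)
  then have "x * (1 - coef k * phi x) * (1 + c * tail k) \<le> x * (1 - coef k * c) * (1 + c * tail k)"
    using x denom by (intro mult_right_mono mult_left_mono) auto
  also have "\<dots> = x * (1 + c * tail (Suc k)) - x * coef k * c\<^sup>2 * tail k"
    by (simp add: coef_eq_tail_diff algebra_simps power2_eq_square)
  also have "\<dots> \<le> x * (1 + c * tail (Suc k))"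
    using x c(1) coef_pos[of k] tail_nonneg[of k] by simp
  finally have "alpha_seq 1 b (Suc k) * (1 + c * tail k) \<le> x * (1 + c * tail (Suc k))"
    by (simp add: alpha_seq_1_Suc alpha_step_def x_def)
  then have "alpha_seq 1 b (Suc k) / (1 + c * tail (Suc k)) \<le> x / (1 + c * tail k)"
    using denom by (simp add: divide_simps)
  then show ?case
    using step.IH by (simp add: x_def)
qed

lemma alpha_seq_1_convergent: "\<exists>L. alpha_seq 1 b \<longlonglongrightarrow> L"
proof -
  have "\<forall>k. 0 \<le> alpha_seq 1 b k"
    using alpha_seq_1_bounds less_imp_le by blast
  then show ?thesis
    using decseq_convergent[OF alpha_seq_1_decseq] by blast
qed

lemma alpha_seq_1_limit_ge:
  assumes "alpha_seq 1 b \<longlonglongrightarrow> L"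
  shows "alpha_seq 1 b N * (1 - phi (alpha_seq 1 b N) * tail N) \<le> L"
proof (rule LIMSEQ_le_const)
  let ?c = "phi (alpha_seq 1 b N)"
  have "(\<lambda>k. alpha_seq 1 b k * (1 - ?c * tail k)) \<longlonglongrightarrow> L * (1 - ?c * 0)"
    by (intro tendsto_intros assms tail_tendsto_0)
  then show "(\<lambda>k. alpha_seq 1 b k * (1 - ?c * tail k)) \<longlonglongrightarrow> L"
    by simp
  show "\<exists>M. \<forall>k\<ge>M. alpha_seq 1 b N * (1 - ?c * tail N) \<le> alpha_seq 1 b k * (1 - ?c * tail k)"
    using alpha_seq_1_lower_invariant by (intro exI[of _ N]) auto
qed

lemma alpha_seq_1_limit_pos:
  assumes "alpha_seq 1 b \<longlonglongrightarrow> L"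
  shows "0 < L"
proof -
  have "phi b * tail 0 < 1"
    using phi_less[of b] b_pos b_less by (simp add: tail_def)
  then have "0 < b * (1 - phi b * tail 0)"
    using b_pos by simp
  also have "\<dots> \<le> L"
    using alpha_seq_1_limit_ge[OF assms, of 0] by simp
  finally show ?thesis .
qed

lemma alpha_seq_1_limit_le:
  assumes "alpha_seq 1 b \<longlonglongrightarrow> L"
  shows "L \<le> alpha_seq 1 b N / (1 + phi L * tail N)"
proof (rule LIMSEQ_le_const2)
  have L: "0 \<le> L" "\<And>j. L \<le> alpha_seq 1 b j"
    using alpha_seq_1_limit_pos[OF assms] decseq_ge[OF alpha_seq_1_decseq assms] by simp_all
  have "alpha_seq 1 b j < 1" for j
    using alpha_seq_1_bounds[of j] b_less by simp
  then have c: "0 \<le> phi L" "\<And>j. phi L \<le> phi (alpha_seq 1 b j)"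
    using L by (meson order_le_less_trans phi_nonneg phi_mono)+
  have "(\<lambda>k. alpha_seq 1 b k / (1 + phi L * tail k)) \<longlonglongrightarrow> L / (1 + phi L * 0)"
    by (intro tendsto_intros assms tail_tendsto_0) simp
  then show "(\<lambda>k. alpha_seq 1 b k / (1 + phi L * tail k)) \<longlonglongrightarrow> L"
    by simp
  show "\<exists>M. \<forall>k\<ge>M. alpha_seq 1 b k / (1 + phi L * tail k) \<le> alpha_seq 1 b N / (1 + phi L * tail N)"
    using alpha_seq_1_upper_invariant[OF c] by (intro exI[of _ N]) auto
qed

end

text \<open>Obtained by iterating the bounds of \<open>alpha_step_interval\<close> from \<open>(0.618, 0.618)\<close>,
  rounding outwards to ten decimals.\<close>

definition alpha_0618_enclosures :: "(real \<times> real) list" where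
  "alpha_0618_enclosures =
    [(0.618, 0.618), (0.4907076540, 0.4907076541),
     (0.4712532075, 0.4712532077), (0.4622843622, 0.4622843625),
     (0.4570491792, 0.4570491796), (0.4536010299, 0.4536010304),
     (0.4511529489, 0.4511529496), (0.4493228846, 0.4493228854),
     (0.4479021156, 0.4479021165), (0.4467666895, 0.4467666905),
     (0.4458382485, 0.4458382496), (0.4450647852, 0.4450647864),
     (0.4444104039, 0.4444104052), (0.4438495195, 0.4438495209),
     (0.4433633978, 0.4433633993), (0.4429380032, 0.4429380048),
     (0.4425626110, 0.4425626127), (0.4422288843, 0.4422288861),
     (0.4419302438, 0.4419302457), (0.4416614275, 0.4416614295),
     (0.4414181763, 0.4414181784), (0.4411970060, 0.4411970082),
     (0.4409950384, 0.4409950407), (0.4408098750, 0.4408098774),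
     (0.4406395010, 0.4406395035), (0.4404822116, 0.4404822142),
     (0.4403365544, 0.4403365571), (0.4402012843, 0.4402012871),
     (0.4400753281, 0.4400753310), (0.4399577553, 0.4399577583),
     (0.4398477556, 0.4398477587), (0.4397446199, 0.4397446231),
     (0.4396477249, 0.4396477282), (0.4395565206, 0.4395565240),
     (0.4394705198, 0.4394705233), (0.4393892894, 0.4393892930),
     (0.4393124431, 0.4393124468), (0.4392396352, 0.4392396390),
     (0.4391705554, 0.4391705593), (0.4391049245, 0.4391049285),
     (0.4390424904, 0.4390424945)]"

lemma enclosure_chain_alpha_0618: "enclosure_chain 0 alpha_0618_enclosures"
  by (simp add: alpha_0618_enclosures_def coef_def phi_def field_simps)

lemma alpha_seq_1_0618_40_enclosure: "alpha_seq 1 0.618 40 \<in> {0.4390424904..0.4390424945}"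
proof -
  have last_index: "0 + length alpha_0618_enclosures - 1 = 40"
    by (simp add: alpha_0618_enclosures_def)
  show ?thesis
    using alpha_seq_enclosure_chain[OF enclosure_chain_alpha_0618, of "0.618", unfolded last_index]
    by (simp add: alpha_0618_enclosures_def)
qed

lemma alpha_seq_1_0618_limit_bounds:
  assumes lim: "alpha_seq 1 0.618 \<longlonglongrightarrow> L"
  shows "0.4365 \<le> L \<and> L \<le> 0.4375"
proof -
  let ?x = "alpha_seq 1 0.618 40"
  have b: "0 < (0.618::real)" "(0.618::real) < 3/4"
    by simp_all
  have x: "0.4390424904 \<le> ?x" "?x \<le> 0.4390424945"
    using alpha_seq_1_0618_40_enclosure by simp_all
  have "phi ?x * tail 40 \<le> phi 0.4390424945 * tail 40"
    using x by (intro mult_right_mono phi_mono tail_nonneg) auto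
  moreover have "0 \<le> 1 - phi 0.4390424945 * tail 40"
    by (simp add: phi_def tail_def field_simps)
  ultimately have "0.4390424904 * (1 - phi 0.4390424945 * tail 40) \<le> ?x * (1 - phi ?x * tail 40)"
    using x by (intro mult_mono) auto
  moreover have "0.4365 \<le> 0.4390424904 * (1 - phi 0.4390424945 * tail 40)"
    by (simp add: phi_def tail_def power_divide field_simps)
  ultimately have lower: "0.4365 \<le> L"
    using alpha_seq_1_limit_ge[OF b lim, of 40] by linarith
  have "phi 0.4365 \<le> phi L"
    using lower alpha_seq_1_limit_pos[OF b lim] decseq_ge[OF alpha_seq_1_decseq[OF b] lim, of 0]
    by (intro phi_mono) auto
  then have "1 + phi 0.4365 * tail 40 \<le> 1 + phi L * tail 40"
    by (simp add: mult_right_mono tail_nonneg)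
  moreover have "0 < 1 + phi 0.4365 * tail 40"
    using phi_nonneg[of "0.4365"] tail_nonneg[of 40] by (simp add: add_pos_nonneg)
  ultimately have "?x / (1 + phi L * tail 40) \<le> 0.4390424945 / (1 + phi 0.4365 * tail 40)"
    using x by (intro frac_le) auto
  moreover have "0.4390424945 / (1 + phi 0.4365 * tail 40) \<le> 0.4375"
    by (simp add: phi_def tail_def power_divide field_simps)
  ultimately show ?thesis
    using lower alpha_seq_1_limit_le[OF b lim, of 40] by linarith
qed

theorem lemma1:
  fixes R a0 :: real
  assumes "R > 0" and "0 < a0" and "a0 < 3 / (4 * R)"
  shows "(\<forall>k. (alpha_seq R a0 k)^2 * R^2 \<noteq> 1)
       \<and> decseq (alpha_seq R a0)
       \<and> (\<exists>L>0. alpha_seq R a0 \<longlonglongrightarrow> L)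
       \<and> (a0 = 0.618 / R \<longrightarrow>
            \<bar>R * lim (alpha_seq R a0) - 0.437\<bar> \<le> 0.0005)"
proof -
  define b where "b = a0 * R"
  have b: "0 < b" "b < 3/4"
    using assms by (simp_all add: b_def less_divide_eq algebra_simps)
  have scale: "alpha_seq R a0 = (\<lambda>k. alpha_seq 1 b k / R)"
    using alpha_seq_scale[of R a0] \<open>R > 0\<close> by (intro ext) (simp add: b_def eq_divide_eq)
  obtain L where L: "alpha_seq 1 b \<longlonglongrightarrow> L"
    using alpha_seq_1_convergent[OF b] by blast
  have lim: "alpha_seq R a0 \<longlonglongrightarrow> L / R"
    unfolding scale using \<open>R > 0\<close> by (auto intro!: tendsto_intros L)
  have "(alpha_seq R a0 k)\<^sup>2 * R\<^sup>2 < 1" for k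
    using alpha_seq_1_bounds[OF b, of k] b(2) \<open>R > 0\<close>
    by (simp add: scale power_divide abs_square_less_1)
  moreover have "decseq (alpha_seq R a0)"
    using alpha_seq_1_decseq[OF b] \<open>R > 0\<close>
    by (simp add: scale decseq_def divide_right_mono)
  moreover have "0 < L / R"
    using alpha_seq_1_limit_pos[OF b L] \<open>R > 0\<close> by simp
  moreover have "\<bar>R * lim (alpha_seq R a0) - 0.437\<bar> \<le> 0.0005" if "a0 = 0.618 / R"
  proof -
    have "b = 0.618"
      using that \<open>R > 0\<close> by (simp add: b_def)
    then have "0.4365 \<le> L \<and> L \<le> 0.4375"
      using L alpha_seq_1_0618_limit_bounds by blast
    moreover have "R * lim (alpha_seq R a0) = L"
      using limI[OF lim] \<open>R > 0\<close> by simp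
    ultimately show ?thesis
      unfolding abs_le_iff by auto
  qed
  ultimately show ?thesis
    using lim by (auto simp: less_le)
qed

end
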